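(* Let $n\ge1$. If $p\in\mathcal{T}_n$, then $\iota(p)\notin\{1,2\}^n$.
   Context: $\Gamma=\{0,1,2,3\}$. $C=\{(a,b,c)\in\mathbb{R}^3: a\ge b\ge c>0,\ a+b+c=1\}$, $C^*=\{(a,b,c)\in C: a\ne1/2\}$. Regions of $C^*$: $R_0=\{a<1/2\}$, $R_1=\{2a-1\ge2b,\ a>1/2\}$, $R_2=\{2b>2a-1\ge2c,\ a>1/2\}$, $R_3=\{2c>2a-1,\ a>1/2\}$. Sorted pedal map $P:C^*\to C$: $P(a,b,c)=(1-2c,1-2b,1-2a)$ on $R_0$, $(2a-1,2b,2c)$ on $R_1$, $(2b,2a-1,2c)$ on $R_2$, $(2b,2c,2a-1)$ on $R_3$. $\mathcal{T}_n=\{p\in C: P^j(p)\text{ defined for }0\le j<n,\ P^n(p)=p,\ P^d(p)\ne p\text{ for }1\le d<n\}$. The itinerary $\iota(p)=w_0\cdots w_{n-1}\in\Gamma^n$ of $p\in\mathcal{T}_n$ is defined by $P^j(p)\in R_{w_j}$ for $0\le j<n$. *)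

theory Defs
  imports Complex_Main
begin

type_synonym pt = "real \<times> real \<times> real"

definition C :: "pt set" where
  "C = {(a,b,c). a \<ge> b \<and> b \<ge> c \<and> c > 0 \<and> a + b + c = 1}"

definition Cstar :: "pt set" where
  "Cstar = {(a,b,c). (a,b,c) \<in> C \<and> a \<noteq> 1/2}"

definition R0 :: "pt set" where "R0 = {(a,b,c). (a,b,c) \<in> Cstar \<and> a < 1/2}"
definition R1 :: "pt set" where "R1 = {(a,b,c). (a,b,c) \<in> Cstar \<and> 2*a - 1 \<ge> 2*b \<and> a > 1/2}"
definition R2 :: "pt set" where "R2 = {(a,b,c). (a,b,c) \<in> Cstar \<and> 2*b > 2*a - 1 \<and> 2*a - 1 \<ge> 2*c \<and> a > 1/2}"
definition R3 :: "pt set" where "R3 = {(a,b,c). (a,b,c) \<in> Cstar \<and> 2*c > 2*a - 1 \<and> a > 1/2}"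

definition region :: "nat \<Rightarrow> pt set" where
  "region k = (if k = 0 then R0 else if k = 1 then R1 else if k = 2 then R2 else if k = 3 then R3 else {})"

text \<open>Sorted pedal map; its value outside Cstar is irrelevant (arbitrary choice: identity).\<close>
definition P :: "pt \<Rightarrow> pt" where
  "P p = (case p of (a,b,c) \<Rightarrow>
     if p \<in> R0 then (1 - 2*c, 1 - 2*b, 1 - 2*a)
     else if p \<in> R1 then (2*a - 1, 2*b, 2*c)
     else if p \<in> R2 then (2*b, 2*a - 1, 2*c)
     else if p \<in> R3 then (2*b, 2*c, 2*a - 1)
     else p)"

definition T :: "nat \<Rightarrow> pt set" where
  "T n = {p \<in> C. (\<forall>j<n. (P ^^ j) p \<in> Cstar) \<and> (P ^^ n) p = p \<and>
                 (\<forall>d. 1 \<le> d \<and> d < n \<longrightarrow> (P ^^ d) p \<noteq> p)}"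

definition itinerary :: "nat \<Rightarrow> pt \<Rightarrow> nat list" where
  "itinerary n p = (THE w. length w = n \<and> set w \<subseteq> {0,1,2,3} \<and>
                      (\<forall>j<n. (P ^^ j) p \<in> region (w ! j)))"

end

theory Submission
  imports Defs
begin

text \<open>On \<open>R\<^sub>1\<close> and \<open>R\<^sub>2\<close> the pedal map keeps the smallest coordinate in last place and
  doubles it. A periodic orbit whose itinerary avoids \<open>0\<close> and \<open>3\<close> would therefore satisfy
  \<open>c = 2\<^sup>n c\<close> for the smallest coordinate \<open>c > 0\<close> of its starting point, which is absurd
  for \<open>n \<ge> 1\<close>.\<close>

lemma region_exists:
  assumes "q \<in> Cstar"
  shows "\<exists>k\<in>{0,1,2,3}. q \<in> region k"
proof -
  obtain a b c where q: "q = (a, b, c)" by (cases q) auto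
  show ?thesis
    using assms unfolding q region_def R0_def R1_def R2_def R3_def Cstar_def
    by (cases "a < 1/2"; cases "2*a - 1 \<ge> 2*b"; cases "2*a - 1 \<ge> 2*c") force+
qed

lemma region_unique:
  assumes "q \<in> region k" and "q \<in> region k'"
  shows "k = k'"
proof -
  obtain a b c where q: "q = (a, b, c)" by (cases q) auto
  show ?thesis
    using assms unfolding q region_def R0_def R1_def R2_def R3_def Cstar_def C_def
    by (auto split: if_splits)
qed

lemma itinerary_region:
  assumes "\<forall>j<n. (P ^^ j) p \<in> Cstar" and "j < n"
  shows "(P ^^ j) p \<in> region (itinerary n p ! j)"
proof -
  define admissible where "admissible w \<longleftrightarrow> length w = n \<and> set w \<subseteq> {0,1,2,3} \<and>
    (\<forall>j<n. (P ^^ j) p \<in> region (w ! j))" for w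
  define k where "k j = (SOME k. k \<in> {0,1,2,3} \<and> (P ^^ j) p \<in> region k)" for j
  have k: "k j \<in> {0,1,2,3} \<and> (P ^^ j) p \<in> region (k j)" if "j < n" for j
    unfolding k_def by (rule someI_ex) (use region_exists assms(1) that in blast)
  have "admissible (map k [0..<n])"
    unfolding admissible_def using k by (simp add: image_subset_iff)
  moreover have "w = w'" if "admissible w" and "admissible w'" for w w'
  proof (rule nth_equalityI)
    show "length w = length w'" using that unfolding admissible_def by simp
    show "w ! i = w' ! i" if "i < length w" for i
      using \<open>admissible w\<close> \<open>admissible w'\<close> that unfolding admissible_def
      by (metis region_unique)
  qed
  ultimately have "admissible (itinerary n p)"
    unfolding itinerary_def admissible_def[symmetric] by (metis theI)
  then show ?thesis using assms(2) unfolding admissible_def by blast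
qed

lemma P_doubles_smallest_coordinate:
  assumes "q \<in> R1 \<union> R2"
  shows "snd (snd (P q)) = 2 * snd (snd q)"
proof -
  obtain a b c where q: "q = (a, b, c)" by (cases q) auto
  have "q \<notin> R0" using assms unfolding q R0_def R1_def R2_def by auto
  then show ?thesis using assms unfolding P_def q by auto
qed

lemma iterate_doubles_smallest_coordinate:
  assumes "\<forall>j<m. (P ^^ j) p \<in> R1 \<union> R2"
  shows "snd (snd ((P ^^ m) p)) = 2 ^ m * snd (snd p)"
  using assms
proof (induction m)
  case 0
  then show ?case by simp
next
  case (Suc m)
  then show ?case by (simp add: P_doubles_smallest_coordinate)
qed

theorem mainTheorem6:
  fixes n :: nat and p :: pt
  assumes "n \<ge> 1" and "p \<in> T n"
  shows "itinerary n p \<notin> {w. length w = n \<and> set w \<subseteq> {1,2}}"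
proof
  assume "itinerary n p \<in> {w. length w = n \<and> set w \<subseteq> {1,2}}"
  then have letters: "itinerary n p ! j \<in> {1,2}" if "j < n" for j
    using that by (auto simp: nth_mem subset_iff)
  have defined: "\<forall>j<n. (P ^^ j) p \<in> Cstar" and periodic: "(P ^^ n) p = p"
    and "p \<in> C"
    using assms(2) unfolding T_def by auto
  have "\<forall>j<n. (P ^^ j) p \<in> R1 \<union> R2"
    using itinerary_region[OF defined] letters unfolding region_def by fastforce
  then have "snd (snd p) = 2 ^ n * snd (snd p)"
    using iterate_doubles_smallest_coordinate periodic by metis
  moreover have "snd (snd p) > 0" using \<open>p \<in> C\<close> unfolding C_def by auto
  moreover have "(2::real) ^ n > 1" using assms(1) by (simp add: one_less_power)
  ultimately show False by simp
qed

end
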